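(* Let lines in the real projective plane be in bounded general position, with associated graph $G$. Then every edge of $G$ lies on the boundary of at least one alcove.
   Context: Lines in $\mathbb{R}P^2$ are in general position if no three pass through a common point, and in bounded position if all pairwise intersections lie in $\mathbb{R}^2$. The graph $G$ has as vertices the pairwise intersection points of the lines; two vertices are joined by an edge if some line of the arrangement contains both and no third vertex lies between them on that line; the edge is the closed segment joining them. An alcove is a subset $V\subset\mathbb{R}^2$ which is compact, convex and connected, whose boundary is a union of edges of $G$ belonging to distinct lines, and which contains no proper subset with these two properties. *)

theory Defs
  imports "HOL-Analysis.Analysis"
begin

text \<open>Points of the affine chart R^2 of RP^2 are pairs of reals. Under bounded position
  no line of the arrangement is the line at infinity (when there are at least two lines),
  so each line is represented by its affine part, a set a*x + b*y = c with (a,b) nonzero.\<close>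

definition is_line :: "(real \<times> real) set \<Rightarrow> bool" where
  "is_line L \<longleftrightarrow> (\<exists>a b c. (a, b) \<noteq> (0, 0) \<and> L = {p. a * fst p + b * snd p = c})"

definition general_position :: "(real \<times> real) set set \<Rightarrow> bool" where
  "general_position A \<longleftrightarrow>
     (\<forall>L1\<in>A. \<forall>L2\<in>A. \<forall>L3\<in>A. L1 \<noteq> L2 \<and> L1 \<noteq> L3 \<and> L2 \<noteq> L3 \<longrightarrow> L1 \<inter> L2 \<inter> L3 = {})"

text \<open>All pairwise intersections lie in R^2 (no two lines are parallel).\<close>
definition bounded_position :: "(real \<times> real) set set \<Rightarrow> bool" where
  "bounded_position A \<longleftrightarrow> (\<forall>L1\<in>A. \<forall>L2\<in>A. L1 \<noteq> L2 \<longrightarrow> L1 \<inter> L2 \<noteq> {})"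

definition vertices :: "(real \<times> real) set set \<Rightarrow> (real \<times> real) set" where
  "vertices A = {p. \<exists>L1\<in>A. \<exists>L2\<in>A. L1 \<noteq> L2 \<and> p \<in> L1 \<and> p \<in> L2}"

definition edge_on :: "(real \<times> real) set set \<Rightarrow> (real \<times> real) set \<Rightarrow> (real \<times> real) set \<Rightarrow> bool" where
  "edge_on A L e \<longleftrightarrow> L \<in> A \<and>
     (\<exists>p q. p \<in> vertices A \<and> q \<in> vertices A \<and> p \<noteq> q \<and> p \<in> L \<and> q \<in> L \<and>
            (\<forall>r\<in>vertices A. r \<notin> open_segment p q) \<and> e = closed_segment p q)"

definition is_edge :: "(real \<times> real) set set \<Rightarrow> (real \<times> real) set \<Rightarrow> bool" where
  "is_edge A e \<longleftrightarrow> (\<exists>L. edge_on A L e)"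

definition alcove_shape :: "(real \<times> real) set set \<Rightarrow> (real \<times> real) set \<Rightarrow> bool" where
  "alcove_shape A V \<longleftrightarrow> compact V \<and> convex V \<and> connected V \<and> interior V \<noteq> {} \<and>
     (\<exists>E lineof. (\<forall>e\<in>E. edge_on A (lineof e) e) \<and> inj_on lineof E \<and> frontier V = \<Union>E)"

definition alcove :: "(real \<times> real) set set \<Rightarrow> (real \<times> real) set \<Rightarrow> bool" where
  "alcove A V \<longleftrightarrow> alcove_shape A V \<and> \<not> (\<exists>W. W \<subset> V \<and> alcove_shape A W)"

end

theory Submission
  imports Defs
begin

(* Let the edge e = [p, q] lie on the line L, and let M and N be further lines through p and q;
   they meet in a point r off L. Orient every line other than L so that the midpoint of e lies
   strictly on its positive side, and L so that r does. The intersection of the closed positive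
   half-planes contains e (no vertex lies inside e), lies in the triangle pqr, and has interior
   points near the midpoint of e. By general position each of its nonempty sections by a line is
   an edge of G, so it is an alcove shape with e on its boundary. It is minimal because its
   connected interior avoids every line, hence cannot meet the boundary of a smaller alcove. *)

lemma eventually_inner_gt_along:
  fixes n x w :: "'a::real_inner"
  assumes "c < inner n x"
  shows "\<forall>\<^sub>F e in at_right 0. c < inner n (x + e *\<^sub>R w)"
proof -
  have "((\<lambda>e. inner n (x + e *\<^sub>R w)) \<longlongrightarrow> inner n (x + 0 *\<^sub>R w)) (at_right 0)"
    by (intro tendsto_intros)
  then show ?thesis
    using assms by (auto dest: order_tendstoD(1))
qed

lemma hyperplane_crossing:
  fixes n y z :: "'a::real_inner"
  assumes y: "inner n y < c" and z: "c < inner n z"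
  shows "\<exists>w\<in>open_segment y z. inner n w = c"
proof -
  define t where "t = (c - inner n y) / (inner n z - inner n y)"
  have t: "0 < t" "t < 1"
    using y z by (auto simp: t_def divide_simps)
  have "inner n ((1 - t) *\<^sub>R y + t *\<^sub>R z) = inner n y + t * (inner n z - inner n y)"
    by (simp add: inner_add_right algebra_simps)
  also have "\<dots> = c"
    using y z by (simp add: t_def)
  finally show ?thesis
    using y z t by (auto simp: in_segment intro!: bexI[of _ "(1 - t) *\<^sub>R y + t *\<^sub>R z"])
qed

lemma is_line_iff_hyperplane:
  "is_line L \<longleftrightarrow> (\<exists>n c. n \<noteq> 0 \<and> L = {x. inner n x = c})"
proof
  assume "is_line L"
  then obtain a b c where "(a, b) \<noteq> (0, 0)" "L = {p. a * fst p + b * snd p = c}"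
    unfolding is_line_def by blast
  then show "\<exists>n c. n \<noteq> 0 \<and> L = {x. inner n x = c}"
    by (intro exI[of _ "(a, b)"] exI[of _ c]) (auto simp: inner_prod_def zero_prod_def)
next
  assume "\<exists>n c. n \<noteq> 0 \<and> L = {x. inner n x = c}"
  then obtain a b c where "(a, b) \<noteq> 0" "L = {x. inner (a, b) x = c}"
    by (metis prod.collapse)
  then show "is_line L"
    unfolding is_line_def by (auto simp: inner_prod_def zero_prod_def)
qed

locale oriented_arrangement =
  fixes A :: "'a::euclidean_space set set"
    and u :: "'a set \<Rightarrow> 'a"
    and d :: "'a set \<Rightarrow> real"
  assumes finite_arrangement: "finite A"
    and normal_nonzero: "M \<in> A \<Longrightarrow> u M \<noteq> 0"
    and line_eq: "M \<in> A \<Longrightarrow> M = {x. inner (u M) x = d M}"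
begin

(* The signs of the normals u select which chamber of the arrangement this is. *)
definition cell :: "'a set" where
  "cell = {x. \<forall>M\<in>A. d M \<le> inner (u M) x}"

lemma mem_line_iff: "M \<in> A \<Longrightarrow> x \<in> M \<longleftrightarrow> inner (u M) x = d M"
  using line_eq by blast

lemma convex_line: "M \<in> A \<Longrightarrow> convex M"
  using line_eq by (metis convex_hyperplane)

lemma cell_eq_Inter_halfspaces: "cell = (\<Inter>M\<in>A. {x. d M \<le> inner (u M) x})"
  unfolding cell_def by auto

lemma closed_cell: "closed cell"
  by (simp add: cell_eq_Inter_halfspaces closed_INT closed_halfspace_ge)

lemma convex_cell: "convex cell"
  by (simp add: cell_eq_Inter_halfspaces convex_INT convex_halfspace_ge)

lemma mem_cellD: "x \<in> cell \<Longrightarrow> M \<in> A \<Longrightarrow> d M \<le> inner (u M) x"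
  unfolding cell_def by blast

lemma mem_cell_off_line: "x \<in> cell \<Longrightarrow> M \<in> A \<Longrightarrow> x \<notin> M \<Longrightarrow> d M < inner (u M) x"
  using mem_cellD mem_line_iff by fastforce

lemma strictly_positive_subset_interior_cell:
  "{x. \<forall>M\<in>A. d M < inner (u M) x} \<subseteq> interior cell"
proof (rule interior_maximal)
  have "open (\<Inter>M\<in>A. {x. d M < inner (u M) x})"
    using finite_arrangement by (intro open_INT) (auto simp: open_halfspace_gt)
  moreover have "{x. \<forall>M\<in>A. d M < inner (u M) x} = (\<Inter>M\<in>A. {x. d M < inner (u M) x})"
    by auto
  ultimately show "open {x. \<forall>M\<in>A. d M < inner (u M) x}"
    by simp
  show "{x. \<forall>M\<in>A. d M < inner (u M) x} \<subseteq> cell"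
    by (auto simp: cell_def less_imp_le)
qed

lemma interior_cell_disjoint_line:
  assumes M: "M \<in> A" and x: "x \<in> interior cell"
  shows "x \<notin> M"
proof
  assume "x \<in> M"
  obtain r where r: "r > 0" "ball x r \<subseteq> cell"
    using x by (meson mem_interior)
  define y where "y = x - (r / 2 / norm (u M)) *\<^sub>R u M"
  have "dist x y = r / 2"
    using normal_nonzero[OF M] r by (simp add: y_def dist_norm)
  then have "y \<in> cell"
    using r by auto
  then have "d M \<le> inner (u M) y"
    using M by (rule mem_cellD)
  moreover have "inner (u M) y = d M - (r / 2 / norm (u M)) * inner (u M) (u M)"
    using \<open>x \<in> M\<close> M by (simp add: y_def inner_diff_right mem_line_iff)
  moreover have "(r / 2 / norm (u M)) * inner (u M) (u M) > 0"
    using normal_nonzero[OF M] r by simp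
  ultimately show False
    by simp
qed

lemma frontier_cell: "frontier cell = (\<Union>M\<in>A. cell \<inter> M)"
proof
  show "frontier cell \<subseteq> (\<Union>M\<in>A. cell \<inter> M)"
  proof
    fix x assume x: "x \<in> frontier cell"
    then have "x \<in> cell" "x \<notin> interior cell"
      using closed_cell by (auto simp: frontier_def)
    then show "x \<in> (\<Union>M\<in>A. cell \<inter> M)"
      using strictly_positive_subset_interior_cell mem_cell_off_line by blast
  qed
  show "(\<Union>M\<in>A. cell \<inter> M) \<subseteq> frontier cell"
    using interior_cell_disjoint_line closed_cell by (auto simp: frontier_def)
qed

lemma cell_ray:
  assumes x: "x \<in> cell" and w: "\<forall>M\<in>A. x \<in> M \<longrightarrow> 0 \<le> inner (u M) w"
  shows "\<exists>e>0. x + e *\<^sub>R w \<in> cell"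
proof -
  have "\<forall>\<^sub>F e in at_right 0. d M \<le> inner (u M) (x + e *\<^sub>R w)" if M: "M \<in> A" for M
  proof (cases "x \<in> M")
    case True
    then have "inner (u M) (x + e *\<^sub>R w) = d M + e * inner (u M) w" for e
      using M by (simp add: mem_line_iff inner_add_right)
    then show ?thesis
      using eventually_at_right_less[of 0] w M True by (auto elim!: eventually_mono)
  next
    case False
    show ?thesis
      using eventually_inner_gt_along[OF mem_cell_off_line[OF x M False], of w]
      by (rule eventually_mono) simp
  qed
  then have "\<forall>\<^sub>F e in at_right 0. x + e *\<^sub>R w \<in> cell"
    unfolding cell_def mem_Collect_eq by (intro eventually_ball_finite finite_arrangement) auto
  then have "\<forall>\<^sub>F e in at_right 0. 0 < e \<and> x + e *\<^sub>R w \<in> cell"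
    using eventually_at_right_less[of 0] by (auto intro: eventually_conj)
  then show ?thesis
    using eventually_happens'[OF trivial_limit_at_right_real] by blast
qed

lemma interior_cell_nonempty:
  assumes L: "L \<in> A" and m: "m \<in> L" and pos: "\<forall>M\<in>A - {L}. d M < inner (u M) m"
  shows "interior cell \<noteq> {}"
proof -
  have "inner (u L) (m + e *\<^sub>R u L) = d L + e * inner (u L) (u L)" for e
    using L m by (simp add: mem_line_iff inner_add_right)
  then have "\<forall>\<^sub>F e in at_right 0. d L < inner (u L) (m + e *\<^sub>R u L)"
    using eventually_at_right_less[of 0] normal_nonzero[OF L] by (auto elim!: eventually_mono)
  moreover have "\<forall>\<^sub>F e in at_right 0. d M < inner (u M) (m + e *\<^sub>R u L)" if "M \<in> A - {L}" for M
    using eventually_inner_gt_along pos that by blast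
  ultimately have "\<forall>\<^sub>F e in at_right 0. \<forall>M\<in>A. d M < inner (u M) (m + e *\<^sub>R u L)"
    by (intro eventually_ball_finite finite_arrangement) (metis DiffI singletonD)
  then obtain e where "\<forall>M\<in>A. d M < inner (u M) (m + e *\<^sub>R u L)"
    using eventually_happens'[OF trivial_limit_at_right_real] by blast
  then show ?thesis
    using strictly_positive_subset_interior_cell by blast
qed

lemma mem_line_if_open_segment_meets:
  assumes a: "a \<in> cell" and b: "b \<in> cell" and N: "N \<in> A"
    and r: "r \<in> N" "r \<in> open_segment a b"
  shows "a \<in> N \<and> b \<in> N"
proof -
  obtain t where t: "0 < t" "t < 1" "r = (1 - t) *\<^sub>R a + t *\<^sub>R b"
    using r by (auto simp: in_segment)
  have "(1 - t) * (inner (u N) a - d N) + t * (inner (u N) b - d N) = 0"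
    using r N t(3) by (simp add: mem_line_iff inner_add_right algebra_simps)
  moreover have "0 \<le> (1 - t) * (inner (u N) a - d N)" "0 \<le> t * (inner (u N) b - d N)"
    using mem_cellD[OF a N] mem_cellD[OF b N] t by simp_all
  ultimately have "(1 - t) * (inner (u N) a - d N) = 0" "t * (inner (u N) b - d N) = 0"
    by linarith+
  then have "inner (u N) a = d N" "inner (u N) b = d N"
    using t by simp_all
  then show ?thesis
    using N mem_line_iff by blast
qed

(* The connected interior of the cell meets W but not the frontier of W, so it lies inside W. *)
lemma eq_cell_if_frontier_subset_lines:
  assumes int: "interior cell \<noteq> {}" and W: "W \<subseteq> cell" "closed W" "interior W \<noteq> {}"
    and fr: "frontier W \<subseteq> \<Union>A"
  shows "W = cell"
proof -
  have "interior cell \<inter> frontier W = {}"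
    using fr interior_cell_disjoint_line by blast
  moreover have "interior cell \<inter> W \<noteq> {}"
    using W interior_mono interior_subset by blast
  moreover have "connected (interior cell)"
    by (simp add: convex_cell convex_connected convex_interior)
  ultimately have "interior cell \<subseteq> W"
    using connected_Int_frontier by blast
  then have "closure (interior cell) \<subseteq> W"
    using W by (simp add: closure_minimal)
  then show ?thesis
    using W convex_closure_interior[OF convex_cell int] closed_cell by (simp add: closure_closed)
qed

lemma parallel_lines_eq:
  assumes M: "M \<in> A" and N: "N \<in> A" and parallel: "u N = s *\<^sub>R u M"
    and x: "x \<in> M" "x \<in> N"
  shows "M = N"
proof -
  have "s \<noteq> 0"
    using normal_nonzero[OF N] parallel by auto
  have "z \<in> N \<longleftrightarrow> s * (inner (u M) z - inner (u M) x) = 0" for z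
    using N x parallel by (auto simp: mem_line_iff algebra_simps)
  also have "\<dots> z \<longleftrightarrow> z \<in> M" for z
    using \<open>s \<noteq> 0\<close> M x by (simp add: mem_line_iff)
  finally show ?thesis
    by blast
qed

lemma reorient:
  assumes z: "\<forall>M\<in>A. z M \<notin> M"
  obtains u' d' where "oriented_arrangement A u' d'" "\<forall>M\<in>A. d' M < inner (u' M) (z M)"
proof -
  define s where "s M = (if d M < inner (u M) (z M) then 1 else - 1 :: real)" for M
  have s: "s M = 1 \<or> s M = -1" for M
    by (simp add: s_def)
  have "oriented_arrangement A (\<lambda>M. s M *\<^sub>R u M) (\<lambda>M. s M * d M)"
  proof
    fix M assume M: "M \<in> A"
    show "s M *\<^sub>R u M \<noteq> 0"
      using s[of M] normal_nonzero[OF M] by auto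
    have "inner (s M *\<^sub>R u M) x = s M * d M \<longleftrightarrow> x \<in> M" for x
      using s[of M] M by (auto simp: mem_line_iff)
    then show "M = {x. inner (s M *\<^sub>R u M) x = s M * d M}"
      by blast
  qed (rule finite_arrangement)
  moreover have "\<forall>M\<in>A. s M * d M < inner (s M *\<^sub>R u M) (z M)"
    using z by (auto simp: s_def mem_line_iff)
  ultimately show ?thesis
    by (rule that)
qed

end

lemma lines_oriented_arrangement:
  assumes "finite A" "\<forall>L\<in>A. is_line L"
  obtains u d where "oriented_arrangement A u d"
proof -
  obtain u where "\<forall>L\<in>A. \<exists>c. u L \<noteq> 0 \<and> L = {x. inner (u L) x = c}"
    using assms(2) bchoice[of A "\<lambda>L n. \<exists>c. n \<noteq> 0 \<and> L = {x. inner n x = c}"]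
    unfolding is_line_iff_hyperplane by blast
  then obtain d where ud: "\<forall>L\<in>A. u L \<noteq> 0 \<and> L = {x. inner (u L) x = d L}"
    using bchoice[of A "\<lambda>L c. u L \<noteq> 0 \<and> L = {x. inner (u L) x = c}"] by blast
  have "oriented_arrangement A u d"
  proof
    show "finite A" by (fact assms(1))
  qed (use ud in blast)+
  then show ?thesis
    by (fact that)
qed

definition perp :: "real \<times> real \<Rightarrow> real \<times> real" where
  "perp v = (- snd v, fst v)"

lemma inner_perp_self [simp]: "inner v (perp v) = 0"
  by (simp add: perp_def inner_prod_def)

lemma perp_eq_0_iff [simp]: "perp v = 0 \<longleftrightarrow> v = 0"
  by (auto simp: perp_def zero_prod_def prod_eq_iff)

lemma orthogonal_imp_multiple_perp:
  assumes "v \<noteq> 0" "inner v w = 0"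
  shows "\<exists>t. w = t *\<^sub>R perp v"
proof -
  obtain a b x y where v: "v = (a, b)" and w: "w = (x, y)"
    by (cases v, cases w)
  have orth: "a * x + b * y = 0"
    using assms(2) by (simp add: v w inner_prod_def)
  have nz: "a * a + b * b \<noteq> 0"
    using assms(1) by (simp add: v zero_prod_def sum_squares_eq_zero_iff)
  have "(a * a + b * b) * x = (a * y - b * x) * - b" "(a * a + b * b) * y = (a * y - b * x) * a"
    using orth by algebra+
  then have "w = ((a * y - b * x) / (a * a + b * b)) *\<^sub>R perp v"
    using nz by (simp add: v w perp_def field_simps)
  then show ?thesis
    by blast
qed

locale planar_arrangement = oriented_arrangement A u d
  for A :: "(real \<times> real) set set" and u d
begin

lemma line_direction:
  assumes "M \<in> A" "x \<in> M" "y \<in> M"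
  shows "\<exists>t. y - x = t *\<^sub>R perp (u M)"
  using assms by (intro orthogonal_imp_multiple_perp normal_nonzero) (simp_all add: mem_line_iff inner_diff_right)

lemma lines_meet_at_most_once:
  assumes M: "M \<in> A" and N: "N \<in> A" and "M \<noteq> N"
    and x: "x \<in> M" "x \<in> N" and y: "y \<in> M" "y \<in> N"
  shows "x = y"
proof (rule ccontr)
  assume "x \<noteq> y"
  have "\<exists>t. u K = t *\<^sub>R perp (y - x)" if "K \<in> A" "x \<in> K" "y \<in> K" for K
    using that \<open>x \<noteq> y\<close>
    by (intro orthogonal_imp_multiple_perp) (simp_all add: mem_line_iff inner_diff_right inner_commute)
  then obtain s t where s: "u M = s *\<^sub>R perp (y - x)" and t: "u N = t *\<^sub>R perp (y - x)"
    using M N x y by metis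
  have "s \<noteq> 0"
    using s normal_nonzero[OF M] by auto
  then have "u N = (t / s) *\<^sub>R u M"
    using s t by simp
  then show False
    using parallel_lines_eq[OF M N _ x] \<open>M \<noteq> N\<close> by blast
qed

lemma exists_direction_along_line:
  assumes gp: "general_position A" and M: "M \<in> A" and x: "x \<in> M"
  obtains w where "w = perp (u M) \<or> w = - perp (u M)" "\<forall>N\<in>A. x \<in> N \<longrightarrow> 0 \<le> inner (u N) w"
proof (cases "\<exists>N\<in>A. N \<noteq> M \<and> x \<in> N")
  case True
  then obtain N where N: "N \<in> A" "N \<noteq> M" "x \<in> N"
    by blast
  have only: "K = M \<or> K = N" if "K \<in> A" "x \<in> K" for K
    using gp that M N x unfolding general_position_def by blast
  define w where "w = (if 0 \<le> inner (u N) (perp (u M)) then perp (u M) else - perp (u M))"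
  have "0 \<le> inner (u K) w" if "K \<in> A" "x \<in> K" for K
    using only[OF that] by (auto simp: w_def)
  moreover have "w = perp (u M) \<or> w = - perp (u M)"
    by (simp add: w_def)
  ultimately show ?thesis
    using that by blast
next
  case False
  then have "\<forall>K\<in>A. x \<in> K \<longrightarrow> 0 \<le> inner (u K) (perp (u M))"
    by auto
  then show ?thesis
    using that by blast
qed

lemma cell_line_not_singleton:
  assumes gp: "general_position A" and M: "M \<in> A" and x: "x \<in> cell" "x \<in> M"
  shows "\<exists>y\<in>cell \<inter> M. y \<noteq> x"
proof -
  obtain w where w: "w = perp (u M) \<or> w = - perp (u M)" "\<forall>N\<in>A. x \<in> N \<longrightarrow> 0 \<le> inner (u N) w"
    using exists_direction_along_line[OF gp M x(2)] .
  obtain e where e: "e > 0" "x + e *\<^sub>R w \<in> cell"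
    using cell_ray[OF x(1) w(2)] by blast
  have "inner (u M) w = 0" "w \<noteq> 0"
    using w(1) normal_nonzero[OF M] by auto
  then have "x + e *\<^sub>R w \<in> M" "x + e *\<^sub>R w \<noteq> x"
    using M x(2) e(1) by (simp_all add: mem_line_iff inner_add_right)
  then show ?thesis
    using e(2) by blast
qed

(* Only M passes through a non-vertex x, so the cell extends from x along M in the direction -w. *)
lemma cell_line_minimizer_is_vertex:
  assumes M: "M \<in> A" and x: "x \<in> cell" "x \<in> M"
    and w: "inner (u M) w = 0" "w \<noteq> 0"
    and min: "\<forall>y\<in>cell \<inter> M. inner w x \<le> inner w y"
  shows "x \<in> vertices A"
proof (rule ccontr)
  assume "x \<notin> vertices A"
  then have "N = M" if "N \<in> A" "x \<in> N" for N
    using M x(2) that unfolding vertices_def by blast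
  then have "\<forall>N\<in>A. x \<in> N \<longrightarrow> 0 \<le> inner (u N) (- w)"
    using w(1) by auto
  then obtain e where e: "e > 0" "x + e *\<^sub>R (- w) \<in> cell"
    using cell_ray[OF x(1)] by blast
  have "x + e *\<^sub>R (- w) \<in> M"
    using M x(2) w(1) by (simp add: mem_line_iff inner_diff_right)
  then have "inner w x \<le> inner w (x - e *\<^sub>R w)"
    using min e(2) by auto
  then have "inner w x \<le> inner w x - e * inner w w"
    by (simp add: inner_diff_right)
  moreover have "e * inner w w > 0"
    using e(1) w(2) by simp
  ultimately show False
    by linarith
qed

lemma convex_subset_line_eq_segment:
  assumes M: "M \<in> A" and K: "K \<subseteq> M" "convex K" and ab: "a \<in> K" "b \<in> K" "a \<noteq> b"
    and between: "\<forall>y\<in>K. inner (perp (u M)) a \<le> inner (perp (u M)) y \<and> inner (perp (u M)) y \<le> inner (perp (u M)) b"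
  shows "K = closed_segment a b"
proof
  show "closed_segment a b \<subseteq> K"
    using closed_segment_subset[OF ab(1,2) K(2)] .
  show "K \<subseteq> closed_segment a b"
  proof
    fix y assume y: "y \<in> K"
    define v where "v = perp (u M)"
    have vv: "inner v v > 0"
      using normal_nonzero[OF M] by (simp add: v_def)
    obtain t where t: "y - a = t *\<^sub>R v"
      using line_direction[OF M] K ab y unfolding v_def by blast
    obtain s where s: "b - a = s *\<^sub>R v"
      using line_direction[OF M] K ab unfolding v_def by blast
    have "0 \<le> t * inner v v" "t * inner v v \<le> s * inner v v"
      using between y arg_cong[OF t, of "inner v"] arg_cong[OF s, of "inner v"]
      unfolding v_def[symmetric] by (auto simp: inner_diff_right)
    then have "0 \<le> t" "t \<le> s"
      using vv by (simp_all add: zero_le_mult_iff)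
    moreover have "s \<noteq> 0"
      using s ab(3) by auto
    moreover have "y = (1 - t / s) *\<^sub>R a + (t / s) *\<^sub>R b"
      using s t \<open>s \<noteq> 0\<close> by (simp add: algebra_simps eq_diff_eq)
    ultimately show "y \<in> closed_segment a b"
      unfolding in_segment by (intro exI[of _ "t / s"]) (simp add: divide_simps)
  qed
qed

lemma edge_on_cell_line:
  assumes gp: "general_position A" and bounded: "bounded cell"
    and M: "M \<in> A" and nonempty: "cell \<inter> M \<noteq> {}"
  shows "edge_on A M (cell \<inter> M)"
proof -
  define v where "v = perp (u M)"
  have v: "inner (u M) v = 0" "v \<noteq> 0" "inner (u M) (- v) = 0" "- v \<noteq> 0"
    using normal_nonzero[OF M] by (simp_all add: v_def)
  have "closed M"
    using line_eq[OF M] closed_hyperplane by metis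
  then have compact: "compact (cell \<inter> M)"
    using bounded closed_cell by (simp add: compact_eq_bounded_closed bounded_Int closed_Int)
  have continuous: "continuous_on (cell \<inter> M) (inner v)"
    by (intro continuous_intros)
  obtain a where a: "a \<in> cell \<inter> M" and min: "\<forall>y\<in>cell \<inter> M. inner v a \<le> inner v y"
    using continuous_attains_inf[OF compact nonempty continuous] by blast
  obtain b where b: "b \<in> cell \<inter> M" and max: "\<forall>y\<in>cell \<inter> M. inner v y \<le> inner v b"
    using continuous_attains_sup[OF compact nonempty continuous] by blast
  have vertices: "a \<in> vertices A" "b \<in> vertices A"
    using cell_line_minimizer_is_vertex[OF M _ _ v(1,2) min]
      cell_line_minimizer_is_vertex[OF M _ _ v(3,4)] a b max by auto
  have "a \<noteq> b"
  proof
    assume "a = b"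
    obtain y where y: "y \<in> cell \<inter> M" "y \<noteq> a"
      using cell_line_not_singleton[OF gp M] a by blast
    obtain t where t: "y - a = t *\<^sub>R v"
      using line_direction[OF M] a y unfolding v_def by blast
    have "inner v (y - a) = 0"
      using min max y \<open>a = b\<close> by (force simp: inner_diff_right)
    then have "t = 0"
      using t v(2) by simp
    then show False
      using t y(2) by simp
  qed
  have no_vertex: "\<forall>r\<in>vertices A. r \<notin> open_segment a b"
  proof (intro ballI notI)
    fix r assume "r \<in> vertices A" "r \<in> open_segment a b"
    moreover obtain N where "N \<in> A" "N \<noteq> M" "r \<in> N"
      using \<open>r \<in> vertices A\<close> unfolding vertices_def by blast
    ultimately have "a \<in> N" "b \<in> N"
      using mem_line_if_open_segment_meets a b by blast+
    then show False
      using lines_meet_at_most_once[OF M \<open>N \<in> A\<close>] \<open>N \<noteq> M\<close> a b \<open>a \<noteq> b\<close> by blast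
  qed
  have "cell \<inter> M = closed_segment a b"
    using convex_subset_line_eq_segment[OF M _ _ a b \<open>a \<noteq> b\<close>] min max convex_cell convex_line[OF M]
    unfolding v_def by (simp add: convex_Int)
  then show ?thesis
    unfolding edge_on_def using M vertices a b \<open>a \<noteq> b\<close> no_vertex by blast
qed

(* Writing x - r in the basis p - r, q - r, the half-planes of M and N make both coordinates
   nonnegative and that of L bounds their sum by 1; so the cell lies in the triangle pqr. *)
lemma bounded_cell_of_triangle:
  assumes L: "L \<in> A" and M: "M \<in> A" and N: "N \<in> A"
    and p: "p \<in> L" "p \<in> M" and q: "q \<in> L" "q \<in> N" and r: "r \<in> M" "r \<in> N"
    and pos: "d L < inner (u L) r" "d M < inner (u M) q" "d N < inner (u N) p"
  shows "bounded cell"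
proof -
  have "cell \<subseteq> convex hull {r, p, q}"
  proof
    fix x assume x: "x \<in> cell"
    have "M \<noteq> N"
      using q(2) pos(2) M by (auto simp: mem_line_iff)
    define s where "s = inner (u N) (x - r) / inner (u N) (p - r)"
    define t where "t = inner (u M) (x - r) / inner (u M) (q - r)"
    have Np: "inner (u N) (p - r) > 0" and Mq: "inner (u M) (q - r) > 0"
      using pos r M N by (simp_all add: mem_line_iff inner_diff_right)
    have "s \<ge> 0" "t \<ge> 0"
      using Np Mq mem_cellD[OF x M] mem_cellD[OF x N] r M N
      by (simp_all add: s_def t_def mem_line_iff inner_diff_right)
    define w where "w = x - r - s *\<^sub>R (p - r) - t *\<^sub>R (q - r)"
    have "inner (u M) w = 0" "inner (u N) w = 0"
      using Np Mq p q r M N by (simp_all add: w_def s_def t_def mem_line_iff inner_diff_right)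
    then have "r + w \<in> M" "r + w \<in> N"
      using r M N by (simp_all add: mem_line_iff inner_add_right)
    then have "r = r + w"
      using lines_meet_at_most_once[OF M N \<open>M \<noteq> N\<close> r] by blast
    then have "w = 0"
      by simp
    then have x_eq: "x = (1 - s - t) *\<^sub>R r + s *\<^sub>R p + t *\<^sub>R q"
      by (simp add: w_def algebra_simps)
    have "d L \<le> inner (u L) x"
      using mem_cellD[OF x L] .
    also have "\<dots> = inner (u L) r - (s + t) * (inner (u L) r - d L)"
      using p q L by (simp add: x_eq mem_line_iff inner_add_right algebra_simps)
    finally have "(s + t) * (inner (u L) r - d L) \<le> 1 * (inner (u L) r - d L)"
      by simp
    then have "s + t \<le> 1"
      by (rule mult_right_le_imp_le) (use pos(1) in simp)
    then show "x \<in> convex hull {r, p, q}"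
      using x_eq \<open>s \<ge> 0\<close> \<open>t \<ge> 0\<close> unfolding convex_hull_3
      by (intro CollectI exI[of _ "1 - s - t"] exI[of _ s] exI[of _ t]) simp
  qed
  moreover have "bounded (convex hull {r, p, q})"
    by (simp add: finite_imp_bounded_convex_hull)
  ultimately show ?thesis
    using bounded_subset by blast
qed

lemma edge_subset_cell:
  assumes L: "L \<in> A" and pq: "p \<in> L" "q \<in> L"
    and no_vertex: "\<forall>r\<in>vertices A. r \<notin> open_segment p q"
    and pos: "\<forall>M\<in>A - {L}. d M < inner (u M) (midpoint p q)"
  shows "closed_segment p q \<subseteq> cell"
proof
  fix y assume y: "y \<in> closed_segment p q"
  have segment_in_L: "closed_segment p q \<subseteq> L"
    using closed_segment_subset[OF pq(1,2) convex_line[OF L]] .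
  show "y \<in> cell"
    unfolding cell_def
  proof (intro CollectI ballI)
    fix M assume M: "M \<in> A"
    show "d M \<le> inner (u M) y"
    proof (cases "M = L")
      case True
      have "y \<in> L"
        using y segment_in_L by blast
      then show ?thesis
        using True L by (simp add: mem_line_iff)
    next
      case False
      show ?thesis
      proof (rule ccontr)
        assume "\<not> d M \<le> inner (u M) y"
        moreover have "d M < inner (u M) (midpoint p q)"
          using pos M False by blast
        ultimately obtain z where z: "z \<in> open_segment y (midpoint p q)" "inner (u M) z = d M"
          using hyperplane_crossing[of "u M" y "d M" "midpoint p q"] by auto
        have "open_segment y (midpoint p q) \<subseteq> open_segment p q"
          using y by (simp add: subset_open_segment)
        with z have "z \<in> open_segment p q"
          by blast
        moreover have "z \<in> L"
          using \<open>z \<in> open_segment p q\<close> segment_in_L segment_open_subset_closed by blast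
        moreover have "z \<in> M"
          using z(2) M by (simp add: mem_line_iff)
        ultimately show False
          using no_vertex M L False unfolding vertices_def by blast
      qed
    qed
  qed
qed

lemma edge_on_subset_line:
  assumes "edge_on A L e"
  shows "e \<subseteq> L"
proof -
  obtain p q where "L \<in> A" "p \<in> L" "q \<in> L" "e = closed_segment p q"
    using assms unfolding edge_on_def by blast
  then show ?thesis
    using closed_segment_subset[OF _ _ convex_line] by simp
qed

lemma alcove_cell:
  assumes gp: "general_position A" and bounded: "bounded cell" and interior: "interior cell \<noteq> {}"
  shows "alcove A cell"
proof -
  define A' where "A' = {M \<in> A. cell \<inter> M \<noteq> {}}"
  define E where "E = (\<lambda>M. cell \<inter> M) ` A'"
  define line_of where "line_of = inv_into A' (\<lambda>M. cell \<inter> M)"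
  have edges: "\<forall>e\<in>E. edge_on A (line_of e) e"
  proof
    fix e assume "e \<in> E"
    then have "line_of e \<in> A'" "e = cell \<inter> line_of e"
      by (simp_all add: E_def line_of_def inv_into_into f_inv_into_f)
    moreover have "edge_on A (line_of e) (cell \<inter> line_of e)"
      using edge_on_cell_line[OF gp bounded] \<open>line_of e \<in> A'\<close> by (simp add: A'_def)
    ultimately show "edge_on A (line_of e) e"
      by simp
  qed
  have "inj_on line_of E"
    unfolding E_def line_of_def by (rule inj_on_inv_into) simp
  moreover have "frontier cell = \<Union>E"
    unfolding frontier_cell E_def A'_def by blast
  moreover have "compact cell"
    using bounded closed_cell compact_eq_bounded_closed by blast
  ultimately have "alcove_shape A cell"
    unfolding alcove_shape_def using convex_cell convex_connected[OF convex_cell] interior edges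
    by (intro conjI exI[of _ E] exI[of _ line_of]) simp_all
  moreover have "W = cell" if "W \<subseteq> cell" "alcove_shape A W" for W
  proof -
    obtain E' line_of' where W: "compact W" "interior W \<noteq> {}"
      and edges': "\<forall>e\<in>E'. edge_on A (line_of' e) e" and frontier: "frontier W = \<Union>E'"
      using \<open>alcove_shape A W\<close> unfolding alcove_shape_def by blast
    have "frontier W \<subseteq> \<Union>A"
    proof
      fix x assume "x \<in> frontier W"
      then obtain e where "e \<in> E'" "x \<in> e"
        using frontier by blast
      moreover have "edge_on A (line_of' e) e"
        using edges' \<open>e \<in> E'\<close> by blast
      ultimately have "x \<in> line_of' e" "line_of' e \<in> A"
        using edge_on_subset_line unfolding edge_on_def by blast+
      then show "x \<in> \<Union>A"
        by blast
    qed
    then show ?thesis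
      using eq_cell_if_frontier_subset_lines[OF interior \<open>W \<subseteq> cell\<close>] W compact_imp_closed by blast
  qed
  ultimately show ?thesis
    unfolding alcove_def by blast
qed

lemma edge_triangle:
  assumes gp: "general_position A" and bp: "bounded_position A"
    and L: "L \<in> A" and pq: "p \<in> vertices A" "q \<in> vertices A" "p \<in> L" "q \<in> L" "p \<noteq> q"
  obtains M N r where "M \<in> A" "N \<in> A" "p \<in> M" "q \<in> N" "r \<in> M" "r \<in> N"
    "r \<notin> L" "q \<notin> M" "p \<notin> N"
proof -
  have other_line: "\<exists>M\<in>A. M \<noteq> L \<and> x \<in> M" if x: "x \<in> vertices A" for x
  proof -
    obtain L1 L2 where "L1 \<in> A" "L2 \<in> A" "L1 \<noteq> L2" "x \<in> L1" "x \<in> L2"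
      using x unfolding vertices_def by blast
    then show ?thesis
      by (cases "L1 = L") auto
  qed
  obtain M where M: "M \<in> A" "M \<noteq> L" "p \<in> M"
    using other_line[OF pq(1)] by blast
  obtain N where N: "N \<in> A" "N \<noteq> L" "q \<in> N"
    using other_line[OF pq(2)] by blast
  have "q \<notin> M"
    using lines_meet_at_most_once[OF L M(1) M(2)[symmetric] pq(3) M(3) pq(4)] pq(5) by blast
  moreover have "p \<notin> N"
    using lines_meet_at_most_once[OF L N(1) N(2)[symmetric] pq(4) N(3) pq(3)] pq(5) by blast
  moreover have "M \<noteq> N"
    using \<open>q \<notin> M\<close> N(3) by blast
  moreover obtain r where r: "r \<in> M" "r \<in> N"
    using bp M(1) N(1) \<open>M \<noteq> N\<close> unfolding bounded_position_def by blast
  moreover have "r \<notin> L"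
    using gp[unfolded general_position_def, rule_format, OF L M(1) N(1)] M(2) N(2) \<open>M \<noteq> N\<close> r
    by blast
  ultimately show ?thesis
    using that[OF M(1) N(1) M(3) N(3)] by blast
qed

lemma orient_towards_edge:
  assumes L: "L \<in> A" and pq: "p \<in> L" "q \<in> L" "p \<noteq> q"
    and no_vertex: "\<forall>v\<in>vertices A. v \<notin> open_segment p q" and r: "r \<notin> L"
  obtains u' d' where "planar_arrangement A u' d'" "d' L < inner (u' L) r"
    "\<forall>K\<in>A - {L}. d' K < inner (u' K) (midpoint p q)"
proof -
  define z where "z K = (if K = L then r else midpoint p q)" for K
  have mid: "midpoint p q \<in> L" "midpoint p q \<in> open_segment p q"
    using closed_segment_subset[OF pq(1,2) convex_line[OF L]] pq(3) by auto
  have "\<forall>K\<in>A. z K \<notin> K"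
  proof
    fix K assume K: "K \<in> A"
    show "z K \<notin> K"
    proof (cases "K = L")
      case True
      then show ?thesis
        using r by (simp add: z_def)
    next
      case False
      then have "midpoint p q \<notin> K"
        using no_vertex mid L K unfolding vertices_def by blast
      then show ?thesis
        using False by (simp add: z_def)
    qed
  qed
  then obtain u' d' where arrangement: "oriented_arrangement A u' d'"
    and pos: "\<forall>K\<in>A. d' K < inner (u' K) (z K)"
    by (rule reorient)
  have "d' L < inner (u' L) r"
    using bspec[OF pos L] by (simp add: z_def)
  moreover have "\<forall>K\<in>A - {L}. d' K < inner (u' K) (midpoint p q)"
  proof
    fix K assume "K \<in> A - {L}"
    then show "d' K < inner (u' K) (midpoint p q)"
      using bspec[OF pos, of K] by (simp add: z_def)
  qed
  ultimately show ?thesis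
    using that arrangement by (simp add: planar_arrangement_def)
qed

end

theorem lemma1p9:
  fixes A :: "(real \<times> real) set set" and e :: "(real \<times> real) set"
  assumes "finite A"
    and "\<forall>L\<in>A. is_line L"
    and "general_position A"
    and "bounded_position A"
    and "is_edge A e"
  shows "\<exists>V. alcove A V \<and> e \<subseteq> frontier V"
proof -
  obtain u0 d0 where "oriented_arrangement A u0 d0"
    using lines_oriented_arrangement assms(1,2) by blast
  then interpret some_orientation: planar_arrangement A u0 d0
    by (simp add: planar_arrangement_def)
  obtain L p q where L: "L \<in> A" and pq: "p \<in> vertices A" "q \<in> vertices A" "p \<in> L" "q \<in> L" "p \<noteq> q"
    and no_vertex: "\<forall>v\<in>vertices A. v \<notin> open_segment p q" and e: "e = closed_segment p q"
    using assms(5) unfolding is_edge_def edge_on_def by blast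
  obtain M N r where MN: "M \<in> A" "N \<in> A" "p \<in> M" "q \<in> N" "r \<in> M" "r \<in> N"
    and off: "r \<notin> L" "q \<notin> M" "p \<notin> N"
    using some_orientation.edge_triangle[OF assms(3,4) L pq] .
  obtain u d where "planar_arrangement A u d" and pos_L: "d L < inner (u L) r"
    and pos_mid: "\<forall>K\<in>A - {L}. d K < inner (u K) (midpoint p q)"
    using some_orientation.orient_towards_edge[OF L pq(3-5) no_vertex off(1)] .
  then interpret planar_arrangement A u d
    by simp
  have "e \<subseteq> cell" "e \<subseteq> L"
    using edge_subset_cell[OF L pq(3,4) no_vertex pos_mid] closed_segment_subset[OF pq(3,4) convex_line[OF L]] e
    by simp_all
  then have "bounded cell"
    using e by (intro bounded_cell_of_triangle[OF L MN(1,2) pq(3) MN(3) pq(4) MN(4-6) pos_L]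
        mem_cell_off_line MN(1,2) off(2,3)) auto
  moreover have "interior cell \<noteq> {}"
    using interior_cell_nonempty[OF L _ pos_mid] \<open>e \<subseteq> L\<close> e midpoint_in_closed_segment by blast
  moreover have "e \<subseteq> frontier cell"
    using \<open>e \<subseteq> cell\<close> \<open>e \<subseteq> L\<close> L unfolding frontier_cell by blast
  ultimately show ?thesis
    using alcove_cell[OF assms(3)] by blast
qed

end
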